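(* Let $G$ be a connected graph on $n$ vertices with maximum degree $\Delta\geq 2$. Then \[ \log_\Delta\Big(\frac{n+1}{2}\Big)\leq \operatorname{cdim}(G). \]
   Context: All graphs are finite, simple, undirected and nonempty. For distinct vertices $v,w$, $\kappa(v,w)$ is the maximum number of internally vertex-disjoint $v$–$w$ paths (an edge $vw$ counts as one such path); $\kappa(v,v)=\infty$. For an ordered vertex set $W=(w_1,\ldots,w_k)$, $r_G(v,W)=[\kappa(v,w_1),\ldots,\kappa(v,w_k)]$. $W$ is resolving if $r_G(v_1,W)=r_G(v_2,W)$ implies $v_1=v_2$. The connectivity dimension $\operatorname{cdim}(G)$ is the minimum cardinality of a resolving set. *)

theory Defs
  imports Complex_Main "HOL-Library.Extended_Nat"
begin

definition simple_graph :: "'a set \<Rightarrow> ('a \<Rightarrow> 'a \<Rightarrow> bool) \<Rightarrow> bool" where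
  "simple_graph V E \<longleftrightarrow> finite V \<and> V \<noteq> {} \<and>
     (\<forall>u v. E u v \<longrightarrow> u \<in> V \<and> v \<in> V) \<and>
     (\<forall>u v. E u v \<longrightarrow> E v u) \<and> (\<forall>u. \<not> E u u)"

definition connected_graph :: "'a set \<Rightarrow> ('a \<Rightarrow> 'a \<Rightarrow> bool) \<Rightarrow> bool" where
  "connected_graph V E \<longleftrightarrow> (\<forall>u\<in>V. \<forall>v\<in>V. E\<^sup>*\<^sup>* u v)"

definition degree :: "'a set \<Rightarrow> ('a \<Rightarrow> 'a \<Rightarrow> bool) \<Rightarrow> 'a \<Rightarrow> nat" where
  "degree V E v = card {u \<in> V. E v u}"

definition max_degree :: "'a set \<Rightarrow> ('a \<Rightarrow> 'a \<Rightarrow> bool) \<Rightarrow> nat" where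
  "max_degree V E = Max (degree V E ` V)"

definition is_path :: "('a \<Rightarrow> 'a \<Rightarrow> bool) \<Rightarrow> 'a \<Rightarrow> 'a \<Rightarrow> 'a list \<Rightarrow> bool" where
  "is_path E v w p \<longleftrightarrow> p \<noteq> [] \<and> hd p = v \<and> last p = w \<and> distinct p \<and>
     (\<forall>i. Suc i < length p \<longrightarrow> E (p ! i) (p ! Suc i))"

definition interior :: "'a list \<Rightarrow> 'a set" where
  "interior p = set (butlast (tl p))"

definition kappa :: "('a \<Rightarrow> 'a \<Rightarrow> bool) \<Rightarrow> 'a \<Rightarrow> 'a \<Rightarrow> enat" where
  "kappa E v w = (if v = w then \<infinity> else
     Sup {enat (card P) | P. finite P \<and> (\<forall>p\<in>P. is_path E v w p) \<and>
            (\<forall>p\<in>P. \<forall>q\<in>P. p \<noteq> q \<longrightarrow> interior p \<inter> interior q = {})})"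

(* resolving set: the vector r(v,W) = [kappa(v,w_1),...,kappa(v,w_k)] determines v.
   Ordering of W is irrelevant, so W is taken as a set. *)
definition resolving :: "'a set \<Rightarrow> ('a \<Rightarrow> 'a \<Rightarrow> bool) \<Rightarrow> 'a set \<Rightarrow> bool" where
  "resolving V E W \<longleftrightarrow> W \<subseteq> V \<and>
     (\<forall>v1\<in>V. \<forall>v2\<in>V. (\<forall>w\<in>W. kappa E v1 w = kappa E v2 w) \<longrightarrow> v1 = v2)"

definition cdim :: "'a set \<Rightarrow> ('a \<Rightarrow> 'a \<Rightarrow> bool) \<Rightarrow> nat" where
  "cdim V E = (LEAST k. \<exists>W. resolving V E W \<and> card W = k)"

end

theory Submission
  imports Defs "HOL-Library.FuncSet"
begin

(* Two internally disjoint v-w paths with v \<noteq> w leave v through different neighbours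
   (only the edge vw itself has no interior), so \<kappa>(v,w) \<le> deg v \<le> \<Delta>; connectivity gives
   \<kappa>(v,w) \<ge> 1.  Hence a resolving set W of size k maps the vertices outside W injectively
   into {1..\<Delta>}^W, so n \<le> k + \<Delta>^k < 2\<Delta>^k because k < 2^k \<le> \<Delta>^k. *)

lemma is_path_ConsE:
  assumes "is_path E v w p" "v \<noteq> w"
  obtains u rest where "p = v # u # rest" "E v u"
proof -
  obtain rest' where p: "p = v # rest'"
    using assms(1) unfolding is_path_def by (cases p) auto
  with assms have "rest' \<noteq> []"
    unfolding is_path_def by auto
  then obtain u rest where "p = v # u # rest"
    using p by (cases rest') auto
  moreover from this have "E v u"
    using assms(1) unfolding is_path_def by force
  ultimately show thesis by (rule that)
qed

lemma is_path_second_vertex_eq_end: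
  assumes "is_path E v w (v # w # rest)"
  shows "rest = []"
  using assms unfolding is_path_def by (cases rest rule: rev_cases) auto

lemma second_vertex_in_interior:
  assumes "last (v # u # rest) = w" "u \<noteq> w"
  shows "u \<in> interior (v # u # rest)"
  using assms unfolding interior_def by (cases rest) auto

lemma rtranclp_imp_path:
  assumes "E\<^sup>*\<^sup>* u v" "u \<noteq> v"
  shows "\<exists>p. is_path E u v p"
  using assms
proof (induction rule: converse_rtranclp_induct)
  case base
  then show ?case by simp
next
  case (step u y)
  show ?case
  proof (cases "y = v")
    case True
    then have "is_path E u v [u, v]"
      using step unfolding is_path_def by (auto simp: less_Suc_eq)
    then show ?thesis by blast
  next
    case False
    then obtain p where p: "is_path E y v p" using step.IH by blast
    show ?thesis
    proof (cases "u \<in> set p")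
      case True
      then obtain i where i: "i < length p" "p ! i = u" by (metis in_set_conv_nth)
      have "is_path E u v (drop i p)"
        using p i unfolding is_path_def by (auto simp: hd_drop_conv_nth last_drop)
      then show ?thesis by blast
    next
      case False
      have "is_path E u v (u # p)"
        using p False step.hyps(1) unfolding is_path_def
        by (auto simp: hd_conv_nth nth_Cons split: nat.split)
      then show ?thesis by blast
    qed
  qed
qed

lemma inj_on_second_vertex:
  assumes paths: "\<forall>p\<in>P. is_path E v w p" and "v \<noteq> w"
    and disjoint: "\<forall>p\<in>P. \<forall>q\<in>P. p \<noteq> q \<longrightarrow> interior p \<inter> interior q = {}"
  shows "inj_on (\<lambda>p. p ! 1) P"
proof (rule inj_onI)
  fix p q assume "p \<in> P" "q \<in> P" and same: "p ! 1 = q ! 1"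
  obtain u rest where p: "p = v # u # rest"
    using paths \<open>p \<in> P\<close> assms(2) by (meson is_path_ConsE)
  obtain rest' where q: "q = v # u # rest'"
    using paths \<open>q \<in> P\<close> assms(2) same p by (metis is_path_ConsE nth_Cons_0 nth_Cons_Suc One_nat_def)
  show "p = q"
  proof (cases "u = w")
    case True
    then show ?thesis
      using paths \<open>p \<in> P\<close> \<open>q \<in> P\<close> p q by (metis is_path_second_vertex_eq_end)
  next
    case False
    then have "u \<in> interior p" "u \<in> interior q"
      using paths \<open>p \<in> P\<close> \<open>q \<in> P\<close> p q by (metis is_path_def second_vertex_in_interior)+
    then show ?thesis using disjoint \<open>p \<in> P\<close> \<open>q \<in> P\<close> by blast
  qed
qed

lemma kappa_le_degree:
  assumes "simple_graph V E" "v \<noteq> w"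
  shows "kappa E v w \<le> enat (degree V E v)"
proof -
  have "card P \<le> degree V E v"
    if paths: "\<forall>p\<in>P. is_path E v w p"
      and disjoint: "\<forall>p\<in>P. \<forall>q\<in>P. p \<noteq> q \<longrightarrow> interior p \<inter> interior q = {}" for P
  proof -
    have "(\<lambda>p. p ! 1) ` P \<subseteq> {u \<in> V. E v u}"
    proof
      fix u assume "u \<in> (\<lambda>p. p ! 1) ` P"
      then obtain p where "p \<in> P" "u = p ! 1" by blast
      then have "E v u"
        using paths assms(2) by (metis is_path_ConsE nth_Cons_0 nth_Cons_Suc One_nat_def)
      then show "u \<in> {u \<in> V. E v u}"
        using assms(1) unfolding simple_graph_def by blast
    qed
    moreover have "finite {u \<in> V. E v u}"
      using assms(1) unfolding simple_graph_def by simp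
    ultimately show ?thesis
      unfolding degree_def using inj_on_second_vertex[OF paths assms(2) disjoint]
      by (intro card_inj_on_le)
  qed
  then show ?thesis
    unfolding kappa_def using assms(2) by (simp, intro Sup_least) auto
qed

lemma kappa_ge_1:
  assumes "E\<^sup>*\<^sup>* v w" "v \<noteq> w"
  shows "1 \<le> kappa E v w"
proof -
  obtain p where "is_path E v w p"
    using rtranclp_imp_path[OF assms] by blast
  then have "enat (card {p}) \<le> kappa E v w"
    unfolding kappa_def using assms(2) by (simp only: if_False) (rule Sup_upper, blast)
  then show ?thesis by (simp add: one_enat_def)
qed

lemma degree_le_max_degree:
  assumes "finite V" "v \<in> V"
  shows "degree V E v \<le> max_degree V E"
  unfolding max_degree_def using assms by simp

lemma kappa_in_degree_range:
  assumes "simple_graph V E" "connected_graph V E" "v \<in> V" "w \<in> V" "v \<noteq> w"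
  shows "kappa E v w \<in> enat ` {1..max_degree V E}"
proof -
  have "E\<^sup>*\<^sup>* v w"
    using assms(2-4) unfolding connected_graph_def by blast
  then have "1 \<le> kappa E v w"
    using assms(5) by (rule kappa_ge_1)
  moreover have "kappa E v w \<le> enat (max_degree V E)"
    using kappa_le_degree[OF assms(1,5)] degree_le_max_degree[of V v E] assms(1,3)
    unfolding simple_graph_def by (meson enat_ord_simps(1) order_trans)
  ultimately show ?thesis
    by (cases "kappa E v w") (auto simp: one_enat_def)
qed

(* Since \<kappa>(v,v) = \<infinity> while \<kappa>(v,w) is finite for v \<noteq> w, each vertex is singled out
   by its own coordinate. *)
lemma resolving_vertex_set:
  assumes "simple_graph V E"
  shows "resolving V E V"
  unfolding resolving_def
proof (intro conjI ballI impI subset_refl)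
  fix v1 v2 assume "v1 \<in> V" "v2 \<in> V" and same: "\<forall>w\<in>V. kappa E v1 w = kappa E v2 w"
  show "v1 = v2"
  proof (rule ccontr)
    assume "v1 \<noteq> v2"
    then have "kappa E v2 v1 \<noteq> \<infinity>"
      using kappa_le_degree[OF assms, of v2 v1] by (auto dest: enat_ile)
    moreover have "kappa E v1 v1 = \<infinity>" unfolding kappa_def by simp
    ultimately show False using same \<open>v1 \<in> V\<close> by metis
  qed
qed

lemma cdim_attained:
  assumes "simple_graph V E"
  obtains W where "resolving V E W" "card W = cdim V E"
proof -
  have "\<exists>W. resolving V E W \<and> card W = cdim V E"
    unfolding cdim_def by (rule LeastI_ex) (use resolving_vertex_set[OF assms] in blast)
  then show thesis using that by blast
qed

lemma card_outside_resolving_le: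
  assumes "resolving V E W" "finite V" "finite S"
    and kappa_values: "\<And>v w. v \<in> V - W \<Longrightarrow> w \<in> W \<Longrightarrow> kappa E v w \<in> S"
  shows "card (V - W) \<le> card S ^ card W"
proof -
  have "finite W" using assms(1,2) unfolding resolving_def by (meson finite_subset)
  let ?r = "\<lambda>v. restrict (kappa E v) W"
  have "inj_on ?r (V - W)"
    using assms(1) unfolding resolving_def inj_on_def by (metis DiffD1 restrict_apply')
  moreover have "?r ` (V - W) \<subseteq> W \<rightarrow>\<^sub>E S"
    using kappa_values by auto
  ultimately have "card (V - W) \<le> card (W \<rightarrow>\<^sub>E S)"
    using \<open>finite W\<close> assms(3) by (intro card_inj_on_le) (auto intro: finite_PiE)
  also have "\<dots> = card S ^ card W"
    using \<open>finite W\<close> by (simp add: card_PiE)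
  finally show ?thesis .
qed

lemma log_le_of_le_add_power:
  fixes n k D :: nat
  assumes "n \<le> k + D ^ k" "2 \<le> D"
  shows "log (real D) ((real n + 1) / 2) \<le> real k"
proof -
  have "k < 2 ^ k" by (rule less_exp)
  also have "(2::nat) ^ k \<le> D ^ k" using assms(2) by (rule power_mono) simp
  finally have "real n + 1 \<le> 2 * real D ^ k"
    using assms(1) by (simp flip: of_nat_power)
  then have "(real n + 1) / 2 \<le> real D powr real k"
    using assms(2) by (simp add: powr_realpow)
  then show ?thesis
    using assms(2) by (simp add: log_le_iff)
qed

theorem mainTheorem4:
  fixes V :: "'a set" and E :: "'a \<Rightarrow> 'a \<Rightarrow> bool"
  assumes "simple_graph V E" and "connected_graph V E"
    and "max_degree V E \<ge> 2"
  shows "log (real (max_degree V E)) ((real (card V) + 1) / 2) \<le> real (cdim V E)"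
proof -
  obtain W where W: "resolving V E W" "card W = cdim V E"
    using assms(1) by (rule cdim_attained)
  have "finite V" "W \<subseteq> V"
    using assms(1) W(1) unfolding simple_graph_def resolving_def by auto
  have "card (V - W) \<le> card (enat ` {1..max_degree V E}) ^ card W"
  proof (rule card_outside_resolving_le[OF W(1) \<open>finite V\<close>])
    fix v w assume "v \<in> V - W" "w \<in> W"
    then show "kappa E v w \<in> enat ` {1..max_degree V E}"
      using \<open>W \<subseteq> V\<close> by (intro kappa_in_degree_range[OF assms(1,2)]) auto
  qed simp
  also have "\<dots> = max_degree V E ^ card W"
    by (simp add: card_image inj_on_def)
  finally have "card (V - W) \<le> max_degree V E ^ card W" .
  moreover have "card (V - W) = card V - card W" "card W \<le> card V"
    using \<open>finite V\<close> \<open>W \<subseteq> V\<close> by (auto intro: card_Diff_subset finite_subset card_mono)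
  ultimately have "card V \<le> card W + max_degree V E ^ card W"
    by linarith
  then show ?thesis
    using log_le_of_le_add_power assms(3) W(2) by metis
qed

end
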